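(* Let $\mathcal{H}$ be a Hilbert space of finite dimension $d$, let $\rho,\eta\in\mathcal{D}(\mathcal{H})$ be quantum states and let $s>0$. Then $\eta=\frac{\rho+s'\tau}{1+s'}$ for some real number $0<s'\le s$ and some state $\tau\in\mathcal{D}(\mathcal{H})$ if and only if $S_m\!\left(\frac{1+s}{s}\eta-\frac1s\rho\right)\ge 0$ for all $m=1,2,\dots,d$.
   Context: $\mathcal{D}(\mathcal{H})$ is the set of density operators on $\mathcal{H}$. For a Hermitian operator $X$ on $\mathcal{H}$, define recursively $S_0(X)=1$ and $S_m(X)=\frac1m\sum_{l=1}^m(-1)^{l-1}\operatorname{tr}[X^l]\,S_{m-l}(X)$ for $m\ge1$. *)

theory Defs
  imports "HOL-Analysis.Analysis"
begin

text \<open>Operators on a d-dimensional complex Hilbert space are d x d complex matrices,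
  indexed by a finite type 'n with CARD('n) = d.\<close>

definition adjoint_mat :: "complex^'n^'n \<Rightarrow> complex^'n^'n" where
  "adjoint_mat A = (\<chi> i j. cnj (A $ j $ i))"

definition hermitian_mat :: "complex^'n^'n \<Rightarrow> bool" where
  "hermitian_mat A \<longleftrightarrow> adjoint_mat A = A"

definition quad_form :: "complex^'n^'n \<Rightarrow> complex^'n \<Rightarrow> complex" where
  "quad_form A x = (\<Sum>i\<in>UNIV. \<Sum>j\<in>UNIV. cnj (x $ i) * A $ i $ j * x $ j)"

definition psd_mat :: "complex^'n^'n \<Rightarrow> bool" where
  "psd_mat A \<longleftrightarrow> hermitian_mat A \<and> (\<forall>x. Im (quad_form A x) = 0 \<and> 0 \<le> Re (quad_form A x))"

definition density_op :: "complex^'n^'n \<Rightarrow> bool" where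
  "density_op A \<longleftrightarrow> psd_mat A \<and> trace A = 1"

primrec matpow :: "complex^'n^'n \<Rightarrow> nat \<Rightarrow> complex^'n^'n" where
  "matpow A 0 = mat 1"
| "matpow A (Suc k) = matpow A k ** A"

function S_poly :: "nat \<Rightarrow> complex^'n^'n \<Rightarrow> complex" where
  "S_poly m X = (if m = 0 then 1 else
     (1 / of_nat m) * (\<Sum>l\<in>{1..m}. (-1) ^ (l - 1) * trace (matpow X l) * S_poly (m - l) X))"
  by auto
termination by (relation "Wellfounded.measure fst") auto

declare S_poly.simps[simp del]

end

theory Submission
  imports Defs "Jordan_Normal_Form.Schur_Decomposition"
begin

text \<open>Put X = ((1 + s)/s) \<eta> - \<rho>/s, a Hermitian matrix of unit trace. The decomposition
  \<eta> = (\<rho> + s' \<tau>)/(1 + s') exists iff X is positive semidefinite: then \<tau> = X and s' = s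
  work, and conversely a decomposition makes X = ((s - s') \<rho> + (1 + s) s' \<tau>)/(s (1 + s')) a
  nonnegative combination of states. By Newton's identities
  S_m(X) is the m-th elementary symmetric polynomial of the eigenvalues \<lambda>_i of X, i.e. the
  m-th coefficient of \<Prod>_i (1 + \<lambda>_i t). The eigenvalues are real; if all are nonnegative so
  are the coefficients, and if all coefficients are nonnegative the polynomial is at least 1 for
  t \<ge> 0, so it cannot vanish at -1/\<lambda>_i for a negative \<lambda>_i. Finally, a Hermitian matrix with
  nonnegative eigenvalues is positive semidefinite, because a minimiser of its quadratic form on
  the unit sphere is an eigenvector.\<close>

section \<open>Newton's identities\<close>

lemma coeff_linear_factor_mult:
  fixes a :: "'a::comm_ring_1"
  shows "coeff ([:1, a:] * q) k = coeff q k + (if k = 0 then 0 else a * coeff q (k - 1))"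
proof -
  have "[:1, a:] * q = q + pCons 0 (Polynomial.smult a q)"
    by simp
  then show ?thesis by (cases k) (auto simp: coeff_pCons)
qed

lemma newton_identity_linear_factor:
  fixes a :: "'a::comm_ring_1"
  assumes p: "p = [:1, a:] * q"
  shows "(\<Sum>l\<in>{1..Suc k}. (-1)^(l - 1) * a^l * coeff p (Suc k - l)) = a * coeff q k"
proof (induction k)
  case 0
  then show ?case using p by (simp add: coeff_linear_factor_mult)
next
  case (Suc k)
  have "(\<Sum>l\<in>{1..Suc (Suc k)}. (-1)^(l - 1) * a^l * coeff p (Suc (Suc k) - l))
      = a * coeff p (Suc k) + (\<Sum>l\<in>{1..Suc k}. (-1)^l * a^Suc l * coeff p (Suc k - l))"
    by (simp add: sum.atLeast_Suc_atMost sum.shift_bounds_cl_Suc_ivl del: sum.cl_ivl_Suc)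
  also have "(\<Sum>l\<in>{1..Suc k}. (-1)^l * a^Suc l * coeff p (Suc k - l))
      = - a * (\<Sum>l\<in>{1..Suc k}. (-1)^(l - 1) * a^l * coeff p (Suc k - l))"
    unfolding sum_distrib_left
  proof (rule sum.cong[OF refl])
    fix l assume "l \<in> {1..Suc k}"
    then obtain j where "l = Suc j" by (cases l) auto
    then show "(-1)^l * a^Suc l * coeff p (Suc k - l)
        = - a * ((-1)^(l - 1) * a^l * coeff p (Suc k - l))" by simp
  qed
  also have "\<dots> = - a * (a * coeff q k)"
    by (simp only: Suc.IH)
  also have "coeff p (Suc k) = coeff q (Suc k) + a * coeff q k"
    using p by (simp add: coeff_linear_factor_mult)
  finally show ?case by (simp add: algebra_simps)
qed

text \<open>The m-th coefficient of esym_poly lam n is the elementary symmetric polynomial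
  e_m(lam 0, ..., lam (n - 1)).\<close>

definition esym_poly :: "(nat \<Rightarrow> 'a::comm_ring_1) \<Rightarrow> nat \<Rightarrow> 'a poly" where
  "esym_poly lam n = (\<Prod>i<n. [:1, lam i:])"

lemma esym_poly_Suc: "esym_poly lam (Suc n) = [:1, lam n:] * esym_poly lam n"
  unfolding esym_poly_def by (simp add: lessThan_Suc mult.commute)

lemma coeff_0_esym_poly: "coeff (esym_poly lam n) 0 = 1"
  by (induction n) (simp_all add: esym_poly_def esym_poly_Suc[unfolded esym_poly_def] coeff_linear_factor_mult)

lemma degree_esym_poly_le: "degree (esym_poly lam n) \<le> n"
proof -
  have "degree (esym_poly lam n) \<le> sum (degree \<circ> (\<lambda>i. [:1, lam i:])) {..<n}"
    unfolding esym_poly_def by (rule degree_prod_sum_le) simp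
  also have "\<dots> \<le> (\<Sum>i<n. 1)"
    by (rule sum_mono) (simp add: degree_pCons_le)
  finally show ?thesis by simp
qed

text \<open>Differentiating \<Prod>_i (1 + lam i t) gives \<Sum>_i lam i times the cofactor of the i-th factor,
  and each cofactor is expanded by the one-factor case above.\<close>

theorem newton_identity:
  fixes lam :: "nat \<Rightarrow> 'a::idom"
  shows "of_nat (Suc m) * coeff (esym_poly lam n) (Suc m) =
    (\<Sum>l\<in>{1..Suc m}. (-1)^(l - 1) * (\<Sum>i<n. lam i ^ l) * coeff (esym_poly lam n) (Suc m - l))"
proof -
  define E where "E = esym_poly lam n"
  define q where "q i = (\<Prod>j\<in>{..<n} - {i}. [:1, lam j:])" for i
  have E_factor: "E = [:1, lam i:] * q i" if "i < n" for i
    unfolding E_def esym_poly_def q_def using that by (simp add: prod.remove[of "{..<n}" i])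
  have "of_nat (Suc m) * coeff E (Suc m) = coeff (pderiv E) m"
    by (simp add: coeff_pderiv mult.commute)
  also have "pderiv E = (\<Sum>i<n. Polynomial.smult (lam i) (q i))"
    unfolding E_def esym_poly_def q_def by (simp add: pderiv_prod pderiv_pCons)
  also have "coeff \<dots> m = (\<Sum>i<n. lam i * coeff (q i) m)"
    by (simp add: coeff_sum)
  also have "\<dots> = (\<Sum>i<n. \<Sum>l\<in>{1..Suc m}. (-1)^(l - 1) * lam i^l * coeff E (Suc m - l))"
    using newton_identity_linear_factor[OF E_factor] by simp
  also have "\<dots> = (\<Sum>l\<in>{1..Suc m}. (-1)^(l - 1) * (\<Sum>i<n. lam i ^ l) * coeff E (Suc m - l))"
    by (subst sum.swap) (simp add: sum_distrib_left sum_distrib_right)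
  finally show ?thesis by (simp only: E_def)
qed

lemma complex_power_nonneg: "0 \<le> (x::complex) \<Longrightarrow> 0 \<le> x ^ k"
  by (induction k) (auto simp: less_eq_complex_def)

lemma coeff_esym_poly_nonneg:
  fixes lam :: "nat \<Rightarrow> complex"
  assumes "\<forall>i<n. 0 \<le> lam i"
  shows "0 \<le> coeff (esym_poly lam n) m"
  using assms
proof (induction n arbitrary: m)
  case 0
  then show ?case by (simp add: esym_poly_def less_eq_complex_def)
next
  case (Suc n)
  then show ?case
    unfolding esym_poly_Suc coeff_linear_factor_mult by simp
qed

lemma poly_esym_poly_ge_1:
  fixes lam :: "nat \<Rightarrow> complex"
  assumes coeffs: "\<forall>m\<in>{1..n}. 0 \<le> coeff (esym_poly lam n) m" and "0 \<le> x"
  shows "1 \<le> poly (esym_poly lam n) x"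
proof -
  define E where "E = esym_poly lam n"
  have "poly E x = (\<Sum>k\<le>degree E. coeff E k * x ^ k)" by (rule poly_altdef)
  also have "\<dots> = 1 + (\<Sum>k\<in>{1..degree E}. coeff E k * x ^ k)"
    by (simp add: E_def coeff_0_esym_poly atMost_atLeast0 sum.atLeast_Suc_atMost)
  finally have "poly E x = 1 + (\<Sum>k\<in>{1..degree E}. coeff E k * x ^ k)" .
  moreover have "0 \<le> (\<Sum>k\<in>{1..degree E}. coeff E k * x ^ k)"
    using coeffs degree_esym_poly_le[of lam n] \<open>0 \<le> x\<close>
    by (intro sum_nonneg mult_nonneg_nonneg complex_power_nonneg) (auto simp: E_def)
  ultimately show ?thesis by (simp add: E_def)
qed

lemma esym_poly_coeffs_nonneg_iff:
  fixes lam :: "nat \<Rightarrow> complex"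
  assumes real: "\<forall>i<n. lam i \<in> \<real>"
  shows "(\<forall>m\<in>{1..n}. 0 \<le> coeff (esym_poly lam n) m) \<longleftrightarrow> (\<forall>i<n. 0 \<le> lam i)"
proof
  assume coeffs: "\<forall>m\<in>{1..n}. 0 \<le> coeff (esym_poly lam n) m"
  show "\<forall>i<n. 0 \<le> lam i"
  proof (intro allI impI)
    fix i assume "i < n"
    show "0 \<le> lam i"
    proof (rule ccontr)
      obtain r where r: "lam i = of_real r"
        using real \<open>i < n\<close> by (auto elim: Reals_cases)
      assume "\<not> 0 \<le> lam i"
      then have "r < 0" by (simp add: r less_eq_complex_def)
      define x where "x = - 1 / lam i"
      have "0 \<le> x" "poly [:1, lam i:] x = 0"
        using \<open>r < 0\<close> by (simp_all add: x_def r less_eq_complex_def)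
      obtain q where "esym_poly lam n = [:1, lam i:] * q"
        unfolding esym_poly_def using \<open>i < n\<close> by (metis dvdE dvd_prodI finite_lessThan lessThan_iff)
      then have "poly (esym_poly lam n) x = 0"
        by (simp only: poly_mult \<open>poly [:1, lam i:] x = 0\<close> mult_zero_left)
      then show False
        using poly_esym_poly_ge_1[OF coeffs \<open>0 \<le> x\<close>] by (simp add: less_eq_complex_def)
    qed
  qed
qed (simp add: coeff_esym_poly_nonneg)

lemma S_poly_eq_coeff_esym_poly:
  assumes traces: "\<And>l. 1 \<le> l \<Longrightarrow> trace (matpow X l) = (\<Sum>i<n. lam i ^ l)"
  shows "S_poly m X = coeff (esym_poly lam n) m"
proof (induction m rule: less_induct)
  case (less m)
  show ?case
  proof (cases m)
    case 0
    then show ?thesis by (subst S_poly.simps) (simp add: coeff_0_esym_poly)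
  next
    case (Suc k)
    have "S_poly m X
        = (\<Sum>l\<in>{1..m}. (-1)^(l - 1) * trace (matpow X l) * S_poly (m - l) X) / of_nat m"
      using Suc by (subst S_poly.simps) simp
    also have "\<dots> = (\<Sum>l\<in>{1..m}. (-1)^(l - 1) * (\<Sum>i<n. lam i ^ l) * coeff (esym_poly lam n) (m - l))
        / of_nat m"
      using less Suc by (intro arg_cong2[where f = "(/)"] sum.cong) (auto simp: traces)
    also have "\<dots> = of_nat m * coeff (esym_poly lam n) m / of_nat m"
      using newton_identity[of k lam n] Suc by simp
    finally show ?thesis using Suc by (simp del: of_nat_Suc)
  qed
qed

section \<open>Hermitian matrices and positive semidefiniteness\<close>

definition cinner :: "complex^'n \<Rightarrow> complex^'n \<Rightarrow> complex" where
  "cinner x y = (\<Sum>i\<in>UNIV. cnj (vec_nth x i) * vec_nth y i)"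

lemma quad_form_cinner: "quad_form A x = cinner x (A *v x)"
  unfolding quad_form_def cinner_def matrix_vector_mult_def
  by (simp add: sum_distrib_left mult.assoc)

lemma cinner_add_left: "cinner (x + y) z = cinner x z + cinner y z"
  unfolding cinner_def by (simp add: distrib_right sum.distrib)

lemma cinner_add_right: "cinner x (y + z) = cinner x y + cinner x z"
  unfolding cinner_def by (simp add: distrib_left sum.distrib)

lemma cinner_diff_left: "cinner (x - y) z = cinner x z - cinner y z"
  unfolding cinner_def by (simp add: left_diff_distrib sum_subtractf)

lemma cinner_diff_right: "cinner x (y - z) = cinner x y - cinner x z"
  unfolding cinner_def by (simp add: right_diff_distrib sum_subtractf)

lemma cinner_scale_left: "cinner (c *s x) y = cnj c * cinner x y"
  unfolding cinner_def by (simp add: sum_distrib_left mult.assoc)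

lemma cinner_scale_right: "cinner x (c *s y) = c * cinner x y"
  unfolding cinner_def by (simp add: sum_distrib_left mult.left_commute)

lemma cinner_commute: "cinner x y = cnj (cinner y x)"
  unfolding cinner_def by (simp add: mult.commute)

lemma cinner_self: "cinner x x = of_real ((norm x)\<^sup>2)"
proof -
  have "cinner x x = (\<Sum>i\<in>UNIV. of_real ((norm (vec_nth x i))\<^sup>2))"
    unfolding cinner_def by (rule sum.cong) (simp_all only: complex_norm_square mult.commute)
  also have "\<dots> = of_real ((norm x)\<^sup>2)"
    unfolding norm_vec_def L2_set_def by (simp add: sum_nonneg)
  finally show ?thesis .
qed

lemma matrix_vector_mult_scale: "(A::complex^'n^'n) *v (c *s x) = c *s (A *v x)"
  unfolding Finite_Cartesian_Product.vec_eq_iff matrix_vector_mult_def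
  by (simp add: sum_distrib_left mult.left_commute)

lemma hermitian_mat_cnj:
  "hermitian_mat A \<Longrightarrow> cnj (vec_nth (vec_nth A j) i) = vec_nth (vec_nth A i) j"
  unfolding hermitian_mat_def adjoint_mat_def by (metis vec_lambda_beta)

lemma hermitian_mat_add:
  assumes "hermitian_mat A" "hermitian_mat B"
  shows "hermitian_mat (A + B)"
  using hermitian_mat_cnj[OF assms(1)] hermitian_mat_cnj[OF assms(2)]
  unfolding hermitian_mat_def adjoint_mat_def Finite_Cartesian_Product.vec_eq_iff by simp

lemma hermitian_mat_diff:
  assumes "hermitian_mat A" "hermitian_mat B"
  shows "hermitian_mat (A - B)"
  using hermitian_mat_cnj[OF assms(1)] hermitian_mat_cnj[OF assms(2)]
  unfolding hermitian_mat_def adjoint_mat_def Finite_Cartesian_Product.vec_eq_iff by simp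

lemma hermitian_mat_scaleR:
  assumes "hermitian_mat A"
  shows "hermitian_mat (r *\<^sub>R A)"
  using hermitian_mat_cnj[OF assms]
  unfolding hermitian_mat_def adjoint_mat_def Finite_Cartesian_Product.vec_eq_iff by simp

lemma hermitian_cinner_sym:
  assumes "hermitian_mat A"
  shows "cinner x (A *v y) = cinner (A *v x) y"
proof -
  have "cinner x (A *v y)
      = (\<Sum>i\<in>UNIV. \<Sum>j\<in>UNIV. cnj (vec_nth x i) * vec_nth (vec_nth A i) j * vec_nth y j)"
    unfolding cinner_def matrix_vector_mult_def by (simp add: sum_distrib_left mult.assoc)
  also have "\<dots> = (\<Sum>j\<in>UNIV. \<Sum>i\<in>UNIV. cnj (vec_nth (vec_nth A j) i) * cnj (vec_nth x i) * vec_nth y j)"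
    by (subst sum.swap) (simp only: hermitian_mat_cnj[OF assms] mult.commute mult.left_commute)
  also have "\<dots> = cinner (A *v x) y"
    unfolding cinner_def matrix_vector_mult_def by (simp add: sum_distrib_right)
  finally show ?thesis .
qed

lemma hermitian_quad_form_real:
  assumes "hermitian_mat A"
  shows "Im (quad_form A x) = 0"
proof -
  have "cnj (cinner x (A *v x)) = cinner x (A *v x)"
    using hermitian_cinner_sym[OF assms, of x x] cinner_commute[of "A *v x" x] by simp
  then show ?thesis
    unfolding quad_form_cinner by (metis cnj.sel(2) neg_equal_zero)
qed

lemma quad_form_scaleR: "quad_form A (r *\<^sub>R x) = of_real (r\<^sup>2) * quad_form A x"
proof -
  have "r *\<^sub>R x = of_real r *s x"
    unfolding Finite_Cartesian_Product.vec_eq_iff vector_scaleR_component vector_smult_component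
    by (simp add: scaleR_conv_of_real)
  then show ?thesis
    by (simp add: quad_form_cinner matrix_vector_mult_scale cinner_scale_left cinner_scale_right
        power2_eq_square)
qed

lemma quad_form_add: "quad_form (A + B) x = quad_form A x + quad_form B x"
  unfolding quad_form_def by (simp add: algebra_simps sum.distrib)

lemma quad_form_scaleR_mat: "quad_form (a *\<^sub>R A) x = of_real a * quad_form A x"
  unfolding quad_form_def vector_scaleR_component
  by (simp add: scaleR_conv_of_real sum_distrib_left algebra_simps)

lemma quad_form_eigenvector: "A *v v = c *s v \<Longrightarrow> quad_form A v = c * of_real ((norm v)\<^sup>2)"
  unfolding quad_form_cinner by (simp add: cinner_scale_right cinner_self)

lemma hermitian_eigenvalue_real:
  assumes "hermitian_mat A" "A *v v = c *s v" "v \<noteq> 0"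
  shows "c \<in> \<real>"
proof -
  have "Im c * (norm v)\<^sup>2 = 0"
    using hermitian_quad_form_real[OF assms(1), of v] quad_form_eigenvector[OF assms(2)] by simp
  then show ?thesis using assms(3) by (simp add: complex_is_Real_iff)
qed

lemma psd_eigenvalue_nonneg:
  assumes "psd_mat A" "A *v v = c *s v" "v \<noteq> 0"
  shows "0 \<le> c"
proof -
  have "0 \<le> Re (c * of_real ((norm v)\<^sup>2))"
    using assms(1) quad_form_eigenvector[OF assms(2)] unfolding psd_mat_def by metis
  then have "0 \<le> Re c * (norm v)\<^sup>2" by simp
  then have "0 \<le> Re c" using assms(3) by (simp add: zero_le_mult_iff)
  moreover have "c \<in> \<real>"
    using assms psd_mat_def hermitian_eigenvalue_real by blast
  ultimately show ?thesis by (simp add: less_eq_complex_def complex_is_Real_iff)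
qed

lemma nonneg_quadratic_imp_linear_coeff_zero:
  fixes a b :: real
  assumes "\<And>t. 0 \<le> 2 * t * a + t\<^sup>2 * b"
  shows "a = 0"
proof (rule ccontr)
  assume "a \<noteq> 0"
  then have a2: "a\<^sup>2 > 0" by simp
  show False
  proof (cases "b \<le> 0")
    case True
    have "0 \<le> 2 * (-a) * a + (-a)\<^sup>2 * b" by (rule assms)
    moreover have "a\<^sup>2 * b \<le> 0" using True a2 by (simp add: mult_nonneg_nonpos)
    ultimately show False using a2 by (simp add: power2_eq_square)
  next
    case False
    have "0 \<le> 2 * (-a/b) * a + (-a/b)\<^sup>2 * b" by (rule assms)
    also have "\<dots> = - (a\<^sup>2 / b)" using False by (simp add: field_simps power2_eq_square)
    also have "\<dots> < 0" using a2 False by simp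
    finally show False by simp
  qed
qed

text \<open>The form g y = Re \<langle>y, (A - \<mu>) y\<rangle> is nonnegative and vanishes at x, so along the
  direction w = (A - \<mu>) x it equals 2 t \<parallel>w\<parallel>^2 + t^2 g w \<ge> 0 for every real t, forcing w = 0.\<close>

lemma rayleigh_minimizer_eigenvector:
  assumes herm: "hermitian_mat A"
    and lower: "\<And>y. \<mu> * (norm y)\<^sup>2 \<le> Re (quad_form A y)"
    and attained: "Re (quad_form A x) = \<mu> * (norm x)\<^sup>2"
  shows "A *v x = of_real \<mu> *s x"
proof -
  define D where "D y = A *v y - of_real \<mu> *s y" for y
  have D_sym: "cinner y (D z) = cinner (D y) z" for y z
    unfolding D_def cinner_diff_right cinner_diff_left cinner_scale_right cinner_scale_left
      hermitian_cinner_sym[OF herm] by simp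
  have D_add: "D (y + z) = D y + D z" for y z
    unfolding D_def
    by (simp add: Finite_Cartesian_Product.vec_eq_iff algebra_simps)
  have D_scale: "D (c *s y) = c *s D y" for c y
    unfolding D_def
    by (simp add: matrix_vector_mult_scale Finite_Cartesian_Product.vec_eq_iff algebra_simps)
  define g where "g y = Re (cinner y (D y))" for y
  have g_eq: "g y = Re (quad_form A y) - \<mu> * (norm y)\<^sup>2" for y
    unfolding g_def D_def quad_form_cinner cinner_diff_right cinner_scale_right cinner_self by simp
  define w where "w = D x"
  have expand: "g (x + of_real t *s w) = 2 * t * (norm w)\<^sup>2 + t\<^sup>2 * g w" for t
  proof -
    have "cinner (x + of_real t *s w) (D (x + of_real t *s w)) =
        cinner x (D x) + of_real t * cinner x (D w) + of_real t * cinner w (D x)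
        + of_real t * of_real t * cinner w (D w)"
      unfolding D_add D_scale cinner_add_left cinner_add_right cinner_scale_left cinner_scale_right
      by (simp add: algebra_simps)
    also have "cinner x (D w) = cinner w w"
      using D_sym[of x w] by (simp add: w_def)
    also have "cinner w (D x) = cinner w w"
      by (simp add: w_def)
    finally show ?thesis
      using g_eq[of x] attained unfolding g_def by (simp add: cinner_self power2_eq_square)
  qed
  have "0 \<le> g y" for y
    using lower[of y] g_eq[of y] by simp
  then have "0 \<le> 2 * t * (norm w)\<^sup>2 + t\<^sup>2 * g w" for t
    by (simp only: expand[symmetric])
  then have "(norm w)\<^sup>2 = 0"
    by (rule nonneg_quadratic_imp_linear_coeff_zero)
  then show ?thesis
    unfolding w_def D_def by simp
qed

lemma hermitian_min_eigenvalue: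
  fixes A :: "complex^'n^'n"
  assumes "hermitian_mat A"
  obtains \<mu> x where "x \<noteq> 0" "A *v x = of_real \<mu> *s x"
    "\<And>y. \<mu> * (norm y)\<^sup>2 \<le> Re (quad_form A y)"
proof -
  define f where "f y = Re (quad_form A y)" for y
  have "continuous_on (sphere 0 1) f"
    unfolding f_def quad_form_def by (intro continuous_intros)
  moreover have "sphere (0::complex^'n) 1 \<noteq> {}"
    by simp
  ultimately obtain x where x: "x \<in> sphere 0 1" and min: "\<And>y. y \<in> sphere 0 1 \<Longrightarrow> f x \<le> f y"
    using continuous_attains_inf[OF compact_sphere] by blast
  have lower: "f x * (norm y)\<^sup>2 \<le> f y" for y
  proof (cases "y = 0")
    case True
    then show ?thesis by (simp add: f_def quad_form_def)
  next
    case False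
    then have "f x \<le> f ((1 / norm y) *\<^sub>R y)"
      by (intro min) simp
    also have "\<dots> = f y / (norm y)\<^sup>2"
      unfolding f_def quad_form_scaleR by (simp add: power_divide)
    finally show ?thesis
      using False by (simp add: field_simps)
  qed
  have "norm x = 1"
    using x by simp
  then have "A *v x = of_real (f x) *s x"
    using assms lower by (intro rayleigh_minimizer_eigenvector) (simp_all add: f_def)
  moreover have "x \<noteq> 0"
    using \<open>norm x = 1\<close> by auto
  ultimately show ?thesis
    using that lower unfolding f_def by blast
qed

lemma psd_mat_iff_eigenvalues_nonneg:
  "psd_mat A \<longleftrightarrow> hermitian_mat A \<and> (\<forall>c v. v \<noteq> 0 \<longrightarrow> A *v v = c *s v \<longrightarrow> 0 \<le> c)"
proof
  assume "psd_mat A"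
  then show "hermitian_mat A \<and> (\<forall>c v. v \<noteq> 0 \<longrightarrow> A *v v = c *s v \<longrightarrow> 0 \<le> c)"
    using psd_eigenvalue_nonneg unfolding psd_mat_def by blast
next
  assume "hermitian_mat A \<and> (\<forall>c v. v \<noteq> 0 \<longrightarrow> A *v v = c *s v \<longrightarrow> 0 \<le> c)"
  then have herm: "hermitian_mat A" and eig: "\<And>c v. v \<noteq> 0 \<Longrightarrow> A *v v = c *s v \<Longrightarrow> 0 \<le> c"
    by blast+
  obtain \<mu> x where "x \<noteq> 0" "A *v x = of_real \<mu> *s x"
    and lower: "\<And>y. \<mu> * (norm y)\<^sup>2 \<le> Re (quad_form A y)"
    using hermitian_min_eigenvalue[OF herm] by blast
  then have "0 \<le> (of_real \<mu> :: complex)"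
    using eig by blast
  then have "0 \<le> \<mu>"
    by (simp add: less_eq_complex_def)
  then have "0 \<le> Re (quad_form A y)" for y
    using lower[of y] mult_nonneg_nonneg[OF \<open>0 \<le> \<mu>\<close> zero_le_power2[of "norm y"]] by linarith
  then show "psd_mat A"
    unfolding psd_mat_def using herm hermitian_quad_form_real by blast
qed

lemma psd_mat_nonneg_combination:
  assumes A: "psd_mat A" and B: "psd_mat B" and "0 \<le> a" "0 \<le> b"
  shows "psd_mat (a *\<^sub>R A + b *\<^sub>R B)"
proof -
  have herm: "hermitian_mat (a *\<^sub>R A + b *\<^sub>R B)"
    using A B unfolding psd_mat_def by (intro hermitian_mat_add hermitian_mat_scaleR) auto
  have "0 \<le> Re (quad_form (a *\<^sub>R A + b *\<^sub>R B) x)" for x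
  proof -
    have "0 \<le> Re (quad_form A x)" "0 \<le> Re (quad_form B x)"
      using A B unfolding psd_mat_def by blast+
    then show ?thesis
      using \<open>0 \<le> a\<close> \<open>0 \<le> b\<close> by (simp add: quad_form_add quad_form_scaleR_mat)
  qed
  then show ?thesis
    unfolding psd_mat_def using herm hermitian_quad_form_real by blast
qed

section \<open>Eigenvalues via Schur triangularisation\<close>

definition mat_trace :: "'a::comm_ring_1 mat \<Rightarrow> 'a" where
  "mat_trace M = (\<Sum>i<dim_row M. M $$ (i, i))"

lemma mat_trace_mult_comm:
  assumes "A \<in> carrier_mat n m" "B \<in> carrier_mat m n"
  shows "mat_trace (A * B) = mat_trace (B * A)"
proof -
  have "mat_trace (A * B) = (\<Sum>i<n. \<Sum>k<m. A $$ (i, k) * B $$ (k, i))"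
    unfolding mat_trace_def using assms by (simp add: scalar_prod_def atLeast0LessThan)
  also have "\<dots> = (\<Sum>k<m. \<Sum>i<n. B $$ (k, i) * A $$ (i, k))"
    by (subst sum.swap) (simp add: mult.commute)
  also have "\<dots> = mat_trace (B * A)"
    unfolding mat_trace_def using assms by (simp add: scalar_prod_def atLeast0LessThan)
  finally show ?thesis .
qed

lemma upper_triangular_mult:
  fixes A B :: "'a::semiring_0 mat"
  assumes A: "A \<in> carrier_mat n n" "upper_triangular A"
    and B: "B \<in> carrier_mat n n" "upper_triangular B"
  shows "upper_triangular (A * B)"
    and "i < n \<Longrightarrow> (A * B) $$ (i, i) = A $$ (i, i) * B $$ (i, i)"
proof -
  have entry: "(A * B) $$ (i, j) = (\<Sum>l<n. A $$ (i, l) * B $$ (l, j))" if "i < n" "j < n" for i j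
    using A B that by (simp add: scalar_prod_def atLeast0LessThan)
  have A0: "A $$ (i, l) = 0" if "l < i" "i < n" for i l
    using upper_triangularD[OF A(2) that(1)] that(2) A(1) by simp
  have B0: "B $$ (l, j) = 0" if "j < l" "l < n" for l j
    using upper_triangularD[OF B(2) that(1)] that(2) B(1) by simp
  show "upper_triangular (A * B)"
  proof (rule upper_triangularI)
    fix i j assume "j < i" "i < dim_row (A * B)"
    then have "i < n" using A(1) by simp
    have "A $$ (i, l) * B $$ (l, j) = 0" if "l < n" for l
    proof (cases "l < i")
      case True
      then show ?thesis using A0 \<open>i < n\<close> by simp
    next
      case False
      then show ?thesis using B0 \<open>j < i\<close> that by simp
    qed
    then show "(A * B) $$ (i, j) = 0"
      using entry \<open>i < n\<close> \<open>j < i\<close> by simp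
  qed
  assume "i < n"
  have "A $$ (i, l) * B $$ (l, i) = 0" if "l \<in> {..<n} - {i}" for l
  proof (cases "l < i")
    case True
    then show ?thesis using A0 \<open>i < n\<close> by simp
  next
    case False
    then show ?thesis using B0 that by simp
  qed
  then have "(\<Sum>l\<in>{..<n} - {i}. A $$ (i, l) * B $$ (l, i)) = 0"
    by (rule sum.neutral[rule_format])
  then show "(A * B) $$ (i, i) = A $$ (i, i) * B $$ (i, i)"
    using entry[of i i] \<open>i < n\<close> sum.remove[of "{..<n}" i "\<lambda>l. A $$ (i, l) * B $$ (l, i)"] by simp
qed

lemma upper_triangular_pow:
  fixes B :: "'a::semiring_1 mat"
  assumes B: "B \<in> carrier_mat n n" "upper_triangular B"
  shows "upper_triangular (B ^\<^sub>m k) \<and> (\<forall>i<n. (B ^\<^sub>m k) $$ (i, i) = B $$ (i, i) ^ k)"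
proof (induction k)
  case 0
  show ?case using B by simp
next
  case (Suc k)
  have "B ^\<^sub>m k \<in> carrier_mat n n" using B by simp
  then show ?case
    using upper_triangular_mult[OF _ _ B] Suc by (simp add: power_commutes)
qed

lemma mat_trace_pow_eq_power_sum:
  fixes A :: "complex mat"
  assumes A: "A \<in> carrier_mat n n"
  obtains es where "length es = n" "char_poly A = (\<Prod>a\<leftarrow>es. [:- a, 1:])"
    "\<And>k. mat_trace (A ^\<^sub>m k) = (\<Sum>i<n. (es ! i) ^ k)"
proof -
  obtain es where cp: "char_poly A = (\<Prod>a\<leftarrow>es. [:- a, 1:])" and len: "length es = n"
    using char_poly_factorized[OF A] by blast
  obtain B P Q where "schur_decomposition A es = (B, P, Q)"
    by (cases "schur_decomposition A es") auto
  from schur_decomposition[OF A cp this] have sim: "similar_mat_wit A B P Q"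
    and ut: "upper_triangular B" and diag: "diag_mat B = es" by auto
  from sim A have B: "B \<in> carrier_mat n n" and P: "P \<in> carrier_mat n n"
    and Q: "Q \<in> carrier_mat n n" and QP: "Q * P = 1\<^sub>m n"
    unfolding similar_mat_wit_def Let_def by auto
  have "mat_trace (A ^\<^sub>m k) = (\<Sum>i<n. (es ! i) ^ k)" for k
  proof -
    have "mat_trace (A ^\<^sub>m k) = mat_trace (P * B ^\<^sub>m k * Q)"
      by (simp only: similar_mat_wit_pow_id[OF sim])
    also have "\<dots> = mat_trace (Q * (P * B ^\<^sub>m k))"
      by (rule mat_trace_mult_comm[of _ n n]) (use P B Q in auto)
    also have "Q * (P * B ^\<^sub>m k) = B ^\<^sub>m k"
      using assoc_mult_mat[OF Q P pow_carrier_mat[OF B], of k] QP B by simp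
    also have "mat_trace (B ^\<^sub>m k) = (\<Sum>i<n. B $$ (i, i) ^ k)"
      unfolding mat_trace_def using upper_triangular_pow[OF B ut, of k] B by simp
    also have "\<dots> = (\<Sum>i<n. (es ! i) ^ k)"
      using diag B unfolding diag_mat_def by (auto intro!: sum.cong)
    finally show ?thesis .
  qed
  with that cp len show ?thesis by blast
qed

text \<open>A fixed enumeration of the index type, transporting matrices indexed by a finite type
  to the nat-indexed matrices of Jordan_Normal_Form.\<close>

definition enum_idx :: "nat \<Rightarrow> 'n::finite" where
  "enum_idx = (SOME h. bij_betw h {..<CARD('n)} UNIV)"

lemma bij_enum_idx: "bij_betw (enum_idx :: nat \<Rightarrow> 'n::finite) {..<CARD('n)} UNIV"
proof -
  obtain h :: "nat \<Rightarrow> 'n" where "bij_betw h {..<CARD('n)} UNIV"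
    using ex_bij_betw_nat_finite[of "UNIV :: 'n set"] by (auto simp: atLeast0LessThan)
  then show ?thesis
    unfolding enum_idx_def by (rule someI[where P = "\<lambda>h. bij_betw h {..<CARD('n)} UNIV"])
qed

lemma sum_UNIV_enum_idx: "(\<Sum>k\<in>UNIV. f k) = (\<Sum>l<CARD('n::finite). f (enum_idx l :: 'n))"
  using sum.reindex_bij_betw[OF bij_enum_idx, of f] by simp

lemma enum_idx_surj:
  fixes k :: "'n::finite"
  obtains l where "l < CARD('n)" "enum_idx l = k"
  using bij_enum_idx[where 'n = 'n] unfolding bij_betw_def by (metis UNIV_I imageE lessThan_iff)

lemma enum_idx_inj: "i < CARD('n::finite) \<Longrightarrow> j < CARD('n) \<Longrightarrow> (enum_idx i :: 'n) = enum_idx j \<longleftrightarrow> i = j"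
  using bij_enum_idx[where 'n = 'n] unfolding bij_betw_def inj_on_def by blast

definition to_mat :: "'a^'n^'n \<Rightarrow> 'a mat" where
  "to_mat X = Matrix.mat CARD('n) CARD('n) (\<lambda>(i, j). vec_nth (vec_nth X (enum_idx i)) (enum_idx j))"

definition to_vec :: "'a^'n \<Rightarrow> 'a Matrix.vec" where
  "to_vec v = Matrix.vec CARD('n) (\<lambda>i. vec_nth v (enum_idx i))"

lemma to_mat_carrier [simp]: "to_mat (X :: 'a^'n^'n) \<in> carrier_mat CARD('n) CARD('n)"
  unfolding to_mat_def by simp

lemma dim_to_mat [simp]:
  "dim_row (to_mat (X :: 'a^'n^'n)) = CARD('n)" "dim_col (to_mat (X :: 'a^'n^'n)) = CARD('n)"
  unfolding to_mat_def by simp_all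

lemma to_vec_carrier [simp]: "to_vec (v :: 'a^'n) \<in> carrier_vec CARD('n)"
  unfolding to_vec_def by simp

lemma to_mat_mult: "to_mat (A ** B) = to_mat A * to_mat (B :: 'a::semiring_1^'n^'n)"
  by (rule eq_matI)
    (simp_all add: to_mat_def matrix_matrix_mult_def scalar_prod_def atLeast0LessThan sum_UNIV_enum_idx)

lemma to_mat_one: "to_mat (Finite_Cartesian_Product.mat 1 :: 'a::semiring_1^'n^'n) = 1\<^sub>m CARD('n)"
  by (rule eq_matI) (auto simp: to_mat_def Finite_Cartesian_Product.mat_def enum_idx_inj)

lemma to_mat_matpow: "to_mat (matpow X k) = to_mat X ^\<^sub>m k"
  by (induction k) (simp_all add: to_mat_one to_mat_mult)

lemma trace_eq_mat_trace: "trace X = mat_trace (to_mat X)"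
  unfolding trace_def mat_trace_def by (simp add: to_mat_def sum_UNIV_enum_idx)

lemma to_mat_mult_vec: "to_mat X *\<^sub>v to_vec v = to_vec (X *v (v :: 'a::semiring_1^'n))"
  by (rule eq_vecI)
    (simp_all add: to_mat_def to_vec_def matrix_vector_mult_def scalar_prod_def atLeast0LessThan sum_UNIV_enum_idx)

lemma to_vec_smult: "to_vec (c *s v) = c \<cdot>\<^sub>v to_vec v"
  by (rule eq_vecI) (simp_all add: to_vec_def)

lemma to_vec_inject: "to_vec u = to_vec v \<longleftrightarrow> u = (v :: 'a^'n)"
proof
  assume eq: "to_vec u = to_vec v"
  show "u = v"
  proof (rule Finite_Cartesian_Product.vec_eq_iff[THEN iffD2], rule allI)
    fix k :: 'n
    obtain l where "l < CARD('n)" "enum_idx l = k" by (rule enum_idx_surj)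
    then show "vec_nth u k = vec_nth v k"
      using arg_cong[OF eq, of "\<lambda>w. vec_index w l"] by (simp add: to_vec_def)
  qed
qed simp

lemma to_vec_surj:
  assumes "w \<in> carrier_vec CARD('n::finite)"
  obtains v :: "'a^'n" where "w = to_vec v"
proof
  show "w = to_vec ((\<chi> k. vec_index w (inv_into {..<CARD('n)} enum_idx k)) :: 'a^'n)"
    using assms bij_enum_idx[where 'n = 'n] by (auto simp: to_vec_def bij_betw_def)
qed

lemma eigenvalue_to_mat_iff:
  fixes X :: "'a::field^'n^'n"
  shows "eigenvalue (to_mat X) c \<longleftrightarrow> (\<exists>v. v \<noteq> 0 \<and> X *v v = c *s v)"
proof -
  have zero: "0\<^sub>v CARD('n) = to_vec (0 :: 'a^'n)"
    by (rule eq_vecI) (simp_all add: to_vec_def)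
  have "eigenvalue (to_mat X) c \<longleftrightarrow> (\<exists>v :: 'a^'n. eigenvector (to_mat X) (to_vec v) c)"
  proof
    assume "eigenvalue (to_mat X) c"
    then obtain w where w: "eigenvector (to_mat X) w c"
      unfolding eigenvalue_def by blast
    then have "w \<in> carrier_vec CARD('n)"
      unfolding eigenvector_def by simp
    then obtain v :: "'a^'n" where "w = to_vec v"
      by (rule to_vec_surj)
    with w show "\<exists>v :: 'a^'n. eigenvector (to_mat X) (to_vec v) c" by blast
  qed (auto simp: eigenvalue_def)
  then show ?thesis
    unfolding eigenvector_def dim_to_mat zero to_mat_mult_vec to_vec_smult[symmetric] to_vec_inject by simp
qed

lemma eigenvalue_enumeration:
  fixes X :: "complex^'n^'n"
  obtains lam :: "nat \<Rightarrow> complex" where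
    "\<And>k. trace (matpow X k) = (\<Sum>i<CARD('n). lam i ^ k)"
    "\<And>c. (\<exists>v. v \<noteq> 0 \<and> X *v v = c *s v) \<longleftrightarrow> (\<exists>i<CARD('n). c = lam i)"
proof -
  obtain es where len: "length es = CARD('n)" and cp: "char_poly (to_mat X) = (\<Prod>a\<leftarrow>es. [:- a, 1:])"
    and traces: "\<And>k. mat_trace (to_mat X ^\<^sub>m k) = (\<Sum>i<CARD('n). (es ! i) ^ k)"
    using mat_trace_pow_eq_power_sum[OF to_mat_carrier] by blast
  have "(\<exists>v. v \<noteq> 0 \<and> X *v v = c *s v) \<longleftrightarrow> (\<exists>i<CARD('n). c = es ! i)" for c
    unfolding eigenvalue_to_mat_iff[symmetric] eigenvalue_root_char_poly[OF to_mat_carrier] cp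
    using len by (auto simp: poly_prod_list_zero_iff in_set_conv_nth)
  then show ?thesis
    using that[of "nth es"] traces by (simp add: trace_eq_mat_trace to_mat_matpow)
qed

section \<open>Positive semidefiniteness and mixtures of states\<close>

lemma psd_mat_iff_S_poly_nonneg:
  fixes X :: "complex^'n^'n"
  assumes herm: "hermitian_mat X"
  shows "psd_mat X \<longleftrightarrow> (\<forall>m\<in>{1..CARD('n)}. 0 \<le> S_poly m X)"
proof (rule eigenvalue_enumeration[of X])
  fix lam assume traces: "\<And>k. trace (matpow X k) = (\<Sum>i<CARD('n). lam i ^ k)"
    and eigenvalues: "\<And>c. (\<exists>v. v \<noteq> 0 \<and> X *v v = c *s v) \<longleftrightarrow> (\<exists>i<CARD('n). c = lam i)"
  have real: "\<forall>i<CARD('n). lam i \<in> \<real>"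
  proof (intro allI impI)
    fix i assume "i < CARD('n)"
    then obtain v where "v \<noteq> 0" "X *v v = lam i *s v"
      using eigenvalues[of "lam i"] by blast
    then show "lam i \<in> \<real>"
      using hermitian_eigenvalue_real[OF herm] by blast
  qed
  have "psd_mat X \<longleftrightarrow> (\<forall>c. (\<exists>v. v \<noteq> 0 \<and> X *v v = c *s v) \<longrightarrow> 0 \<le> c)"
    unfolding psd_mat_iff_eigenvalues_nonneg using herm by blast
  also have "\<dots> \<longleftrightarrow> (\<forall>i<CARD('n). 0 \<le> lam i)"
    unfolding eigenvalues by blast
  also have "\<dots> \<longleftrightarrow> (\<forall>m\<in>{1..CARD('n)}. 0 \<le> coeff (esym_poly lam CARD('n)) m)"
    using esym_poly_coeffs_nonneg_iff[OF real] by simp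
  also have "\<dots> \<longleftrightarrow> (\<forall>m\<in>{1..CARD('n)}. 0 \<le> S_poly m X)"
    using S_poly_eq_coeff_esym_poly[of X lam "CARD('n)"] traces by simp
  finally show ?thesis .
qed

lemma trace_scaleR_diff: "trace (a *\<^sub>R A - b *\<^sub>R B) = of_real a * trace A - of_real b * trace B"
  unfolding trace_def vector_minus_component vector_scaleR_component
  by (simp add: scaleR_conv_of_real sum_distrib_left sum_subtractf)

lemma mixture_iff_psd:
  fixes \<rho> \<eta> :: "complex^'n^'n" and s :: real
  assumes \<rho>: "density_op \<rho>" and \<eta>: "density_op \<eta>" and "0 < s"
  shows "(\<exists>s' \<tau>. 0 < s' \<and> s' \<le> s \<and> density_op \<tau> \<and> \<eta> = (1 / (1 + s')) *\<^sub>R (\<rho> + s' *\<^sub>R \<tau>))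
    \<longleftrightarrow> psd_mat (((1 + s) / s) *\<^sub>R \<eta> - (1 / s) *\<^sub>R \<rho>)"
    (is "?mixture \<longleftrightarrow> psd_mat ?X")
proof
  assume ?mixture
  then obtain s' \<tau> where s': "0 < s'" "s' \<le> s" and \<tau>: "density_op \<tau>"
    and \<eta>_eq: "\<eta> = (1 / (1 + s')) *\<^sub>R (\<rho> + s' *\<^sub>R \<tau>)" by blast
  define a where "a = (1 + s) / s * (1 / (1 + s')) - 1 / s"
  define b where "b = (1 + s) / s * (1 / (1 + s')) * s'"
  have "?X = a *\<^sub>R \<rho> + b *\<^sub>R \<tau>"
    unfolding \<eta>_eq a_def b_def by (metis (no_types, lifting) add_diff_eq diff_add_eq scaleR_add_right
      scaleR_diff_left scaleR_scaleR add.commute)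
  moreover have "0 \<le> a"
    using \<open>0 < s\<close> s' by (simp add: a_def divide_simps)
  moreover have "0 \<le> b"
    using \<open>0 < s\<close> s' by (simp add: b_def)
  ultimately show "psd_mat ?X"
    using \<rho> \<tau> psd_mat_nonneg_combination unfolding density_op_def by metis
next
  assume "psd_mat ?X"
  moreover have "trace ?X = 1"
    using \<rho> \<eta> \<open>0 < s\<close> unfolding trace_scaleR_diff density_op_def by (simp add: field_simps)
  ultimately have "density_op ?X"
    unfolding density_op_def by blast
  have "\<rho> + s *\<^sub>R ?X = (1 + s) *\<^sub>R \<eta>"
    using \<open>0 < s\<close> by (simp add: scaleR_diff_right)
  then have "\<eta> = (1 / (1 + s)) *\<^sub>R (\<rho> + s *\<^sub>R ?X)"
    using \<open>0 < s\<close> by simp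
  with \<open>density_op ?X\<close> \<open>0 < s\<close> show ?mixture
    by (intro exI[where x = s] exI[where x = ?X]) simp
qed

theorem lemma4:
  fixes \<rho> \<eta> :: "complex^'n^'n" and s :: real
  assumes "density_op \<rho>" and "density_op \<eta>" and "0 < s"
  shows "(\<exists>s' :: real. \<exists>\<tau> :: complex^'n^'n.
            0 < s' \<and> s' \<le> s \<and> density_op \<tau> \<and> \<eta> = (1 / (1 + s')) *\<^sub>R (\<rho> + s' *\<^sub>R \<tau>))
         \<longleftrightarrow>
         (\<forall>m \<in> {1..CARD('n)}.
            Im (S_poly m (((1 + s) / s) *\<^sub>R \<eta> - (1 / s) *\<^sub>R \<rho>)) = 0 \<and>
            0 \<le> Re (S_poly m (((1 + s) / s) *\<^sub>R \<eta> - (1 / s) *\<^sub>R \<rho>)))"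
proof -
  have herm: "hermitian_mat (((1 + s) / s) *\<^sub>R \<eta> - (1 / s) *\<^sub>R \<rho>)"
    using assms by (intro hermitian_mat_diff hermitian_mat_scaleR) (auto simp: density_op_def psd_mat_def)
  show ?thesis
    unfolding mixture_iff_psd[OF assms] psd_mat_iff_S_poly_nonneg[OF herm]
    by (auto simp: less_eq_complex_def)
qed

end
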